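(* Let $\phi=\tilde p/p$ be an irreducible rational inner function on $\mathbb{D}^3$ of degree $(m,n,1)$, written with $p(z)=p_1(z_1,z_2)+z_3p_2(z_1,z_2)$ and $\tilde p(z)=z_3\tilde p_1(z_1,z_2)+\tilde p_2(z_1,z_2)$. Let $\zeta\in\mathbb{T}^3\cap\mathcal{Z}_{\tilde p}$. If the vertical line $\{(\zeta_1,\zeta_2)\}\times\mathbb{T}$ is not contained in $\mathcal{Z}_{\tilde p}$, then there is a neighborhood $U\subseteq\mathbb{C}^3$ of $\zeta$ such that \[\mathcal{Z}_{\tilde p}\cap U=\{(z_1,z_2,\psi^0(z_1,z_2)):(z_1,z_2)\in V\}\] for some open $V\subseteq\mathbb{C}^2$, where $\psi^0:=-\tilde p_2/\tilde p_1$ is analytic near $(\zeta_1,\zeta_2)$.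
   Context: $\mathbb{D}^3$, $\mathbb{T}^3$: open unit tridisk and unit 3-torus. A rational inner function (RIF) is a rational function holomorphic on $\mathbb{D}^3$ with unimodular radial limits a.e. on $\mathbb{T}^3$; it is written $\phi=\tilde p/p$ with $p$ zero-free on $\mathbb{D}^3$, $p$ and $\tilde p$ without common factors, $\dim(\mathcal{Z}_p\cap\mathbb{T}^3)\le1$. Degree $(m,n,1)$ means maximal powers $m,n,1$ in $z_1,z_2,z_3$, and $\tilde p(z)=z_1^mz_2^nz_3\overline{p(1/\bar z_1,1/\bar z_2,1/\bar z_3)}$; then $\tilde p_j(z_1,z_2)=z_1^mz_2^n\overline{p_j(1/\bar z_1,1/\bar z_2)}$ for $j=1,2$, and $p_1,p_2$ (resp. $\tilde p_1,\tilde p_2$) share no common factors. $\mathcal{Z}_q$ denotes the zero set of a polynomial $q$. *)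

theory Defs
  imports "HOL-Analysis.Analysis" "HOL-Computational_Algebra.Computational_Algebra"
begin

text \<open>Polynomials in three complex variables are represented as iterated univariate
polynomials: the outermost variable is z3, the middle one z2, the innermost z1.
Polynomials in (z1,z2) have type complex poly poly (outer z2, inner z1).\<close>

type_synonym poly3 = "complex poly poly poly"
type_synonym poly2 = "complex poly poly"

definition eval2 :: "poly2 \<Rightarrow> complex \<Rightarrow> complex \<Rightarrow> complex" where
  "eval2 q z1 z2 = poly (poly q [:z2:]) z1"

definition eval3 :: "poly3 \<Rightarrow> complex \<Rightarrow> complex \<Rightarrow> complex \<Rightarrow> complex" where
  "eval3 p z1 z2 z3 = poly (poly (poly p [:[:z3:]:]) [:z2:]) z1"

definition coeff3 :: "poly3 \<Rightarrow> nat \<Rightarrow> nat \<Rightarrow> nat \<Rightarrow> complex" where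
  "coeff3 p i j k = coeff (coeff (coeff p k) j) i"

definition deg_z3 :: "poly3 \<Rightarrow> nat" where
  "deg_z3 p = degree p"

definition deg_z2 :: "poly3 \<Rightarrow> nat" where
  "deg_z2 p = Max ((\<lambda>k. degree (coeff p k)) ` {..degree p})"

definition deg_z1 :: "poly3 \<Rightarrow> nat" where
  "deg_z1 p = Max ((\<lambda>(k, j). degree (coeff (coeff p k) j)) ` ({..degree p} \<times> {..deg_z2 p}))"

text \<open>Reflection: refl3 m n l p (z) = z1^m z2^n z3^l conj(p(1/conj z1, 1/conj z2, 1/conj z3))\<close>
definition refl3 :: "nat \<Rightarrow> nat \<Rightarrow> nat \<Rightarrow> poly3 \<Rightarrow> poly3" where
  "refl3 m n l p = (\<Sum>i\<le>m. \<Sum>j\<le>n. \<Sum>k\<le>l.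
      monom (monom (monom (cnj (coeff3 p i j k)) (m - i)) (n - j)) (l - k))"

text \<open>Holomorphy (= analyticity) of a function of two complex variables on a set:
complex Fr\'echet differentiability at every point of an open set.\<close>
definition holo2_on :: "(complex \<times> complex \<Rightarrow> complex) \<Rightarrow> (complex \<times> complex) set \<Rightarrow> bool" where
  "holo2_on f S \<longleftrightarrow> open S \<and>
     (\<forall>w\<in>S. \<exists>a b. (f has_derivative (\<lambda>h. a * fst h + b * snd h)) (at w))"

end

theory Submission
  imports Defs
begin

text \<open>Since \<open>p\<close> has degree 1 in \<open>z3\<close>, so has \<open>p~\<close>, i.e.\ \<open>p~ = p~\<^sub>2 + z3 p~\<^sub>1\<close>.
If \<open>p~\<^sub>1(\<zeta>1,\<zeta>2) = 0\<close>, then the zero \<open>\<zeta>\<close> forces \<open>p~\<^sub>2(\<zeta>1,\<zeta>2) = 0\<close> as well, and the whole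
vertical line through \<open>\<zeta>\<close> lies in the zero set, which is excluded. Hence \<open>p~\<^sub>1 \<noteq> 0\<close> on an
open neighbourhood \<open>V\<close> of \<open>(\<zeta>1,\<zeta>2)\<close>, where \<open>\<psi>\<^sup>0 = - p~\<^sub>2/p~\<^sub>1\<close> is holomorphic, and over
\<open>V\<close> the equation \<open>p~ = 0\<close> is solved exactly by \<open>z3 = \<psi>\<^sup>0(z1,z2)\<close>. Only the degree in \<open>z3\<close>
and the vertical-line hypothesis enter the argument.\<close>

definition holo2_at :: "(complex \<times> complex \<Rightarrow> complex) \<Rightarrow> complex \<times> complex \<Rightarrow> bool" where
  "holo2_at f w \<longleftrightarrow> (\<exists>a b. (f has_derivative (\<lambda>h. a * fst h + b * snd h)) (at w))"

lemma holo2_on_iff: "holo2_on f S \<longleftrightarrow> open S \<and> (\<forall>w\<in>S. holo2_at f w)"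
  unfolding holo2_on_def holo2_at_def ..

lemma holo2_at_imp_isCont: "holo2_at f w \<Longrightarrow> isCont f w"
  unfolding holo2_at_def by (blast intro: has_derivative_continuous)

lemma holo2_at_const: "holo2_at (\<lambda>w. c) w"
  unfolding holo2_at_def by (rule exI[of _ 0], rule exI[of _ 0]) simp

lemma holo2_at_snd: "holo2_at snd w"
  unfolding holo2_at_def by (rule exI[of _ 0], rule exI[of _ 1]) (simp add: has_derivative_snd)

lemma holo2_at_poly_fst: "holo2_at (\<lambda>x. poly q (fst x)) w"
proof -
  have "(poly q has_derivative (\<lambda>h. poly (pderiv q) (fst w) * h)) (at (fst w))"
    using poly_DERIV[of q "fst w"] by (simp add: has_field_derivative_def)
  from has_derivative_compose[OF has_derivative_fst[OF has_derivative_ident] this]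
  have "((\<lambda>x. poly q (fst x)) has_derivative (\<lambda>h. poly (pderiv q) (fst w) * fst h + 0 * snd h)) (at w)"
    by (simp add: o_def)
  then show ?thesis unfolding holo2_at_def by blast
qed

lemma holo2_at_add:
  assumes "holo2_at f w" "holo2_at g w"
  shows "holo2_at (\<lambda>x. f x + g x) w"
proof -
  obtain a b c d where
    f: "(f has_derivative (\<lambda>h. a * fst h + b * snd h)) (at w)" and
    g: "(g has_derivative (\<lambda>h. c * fst h + d * snd h)) (at w)"
    using assms unfolding holo2_at_def by blast
  have "((\<lambda>x. f x + g x) has_derivative (\<lambda>h. (a + c) * fst h + (b + d) * snd h)) (at w)"
    using has_derivative_add[OF f g] by (simp add: algebra_simps)
  then show ?thesis unfolding holo2_at_def by blast
qed

lemma holo2_at_mult: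
  assumes "holo2_at f w" "holo2_at g w"
  shows "holo2_at (\<lambda>x. f x * g x) w"
proof -
  obtain a b c d where
    f: "(f has_derivative (\<lambda>h. a * fst h + b * snd h)) (at w)" and
    g: "(g has_derivative (\<lambda>h. c * fst h + d * snd h)) (at w)"
    using assms unfolding holo2_at_def by blast
  have "((\<lambda>x. f x * g x) has_derivative
      (\<lambda>h. (f w * c + a * g w) * fst h + (f w * d + b * g w) * snd h)) (at w)"
    using has_derivative_mult[OF f g] by (simp add: algebra_simps)
  then show ?thesis unfolding holo2_at_def by blast
qed

lemma holo2_at_divide:
  assumes "holo2_at f w" "holo2_at g w" "g w \<noteq> 0"
  shows "holo2_at (\<lambda>x. f x / g x) w"
proof -
  obtain a b c d where
    f: "(f has_derivative (\<lambda>h. a * fst h + b * snd h)) (at w)" and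
    g: "(g has_derivative (\<lambda>h. c * fst h + d * snd h)) (at w)"
    using assms unfolding holo2_at_def by blast
  have "((\<lambda>x. f x / g x) has_derivative
      (\<lambda>h. ((a * g w - f w * c) / (g w * g w)) * fst h
         + ((b * g w - f w * d) / (g w * g w)) * snd h)) (at w)"
    by (rule has_derivative_eq_rhs[OF has_derivative_divide'[OF f g assms(3)]])
       (use assms(3) in \<open>simp add: fun_eq_iff field_simps\<close>)
  then show ?thesis unfolding holo2_at_def by blast
qed

lemma eval2_pCons: "eval2 (pCons a q) z1 z2 = poly a z1 + z2 * eval2 q z1 z2"
  unfolding eval2_def by simp

lemma eval2_uminus: "eval2 (- q) z1 z2 = - eval2 q z1 z2"
  unfolding eval2_def by simp

lemma holo2_at_eval2: "holo2_at (\<lambda>x. eval2 q (fst x) (snd x)) w"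
proof (induction q rule: pCons_induct)
  case 0
  then show ?case by (simp add: eval2_def holo2_at_const)
next
  case (pCons a q)
  then show ?case unfolding eval2_pCons
    by (intro holo2_at_add holo2_at_mult holo2_at_poly_fst holo2_at_snd)
qed

lemma continuous_on_eval2: "continuous_on S (\<lambda>x. eval2 q (fst x) (snd x))"
  by (intro continuous_at_imp_continuous_on ballI holo2_at_imp_isCont holo2_at_eval2)

lemma holo2_on_eval2_divide:
  "holo2_on (\<lambda>(z1, z2). eval2 q0 z1 z2 / eval2 q1 z1 z2) {(z1, z2). eval2 q1 z1 z2 \<noteq> 0}"
  unfolding holo2_on_iff
proof (intro conjI ballI)
  show "open {(z1, z2). eval2 q1 z1 z2 \<noteq> 0}"
    using open_Collect_neq[OF continuous_on_eval2 continuous_on_const, of q1 0]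
    by (simp add: case_prod_beta')
next
  fix w assume "w \<in> {(z1, z2). eval2 q1 z1 z2 \<noteq> 0}"
  then have "eval2 q1 (fst w) (snd w) \<noteq> 0" by (simp add: case_prod_beta)
  from holo2_at_divide[OF holo2_at_eval2 holo2_at_eval2 this]
  show "holo2_at (\<lambda>(z1, z2). eval2 q0 z1 z2 / eval2 q1 z1 z2) w"
    by (simp add: case_prod_beta')
qed

lemma degree_refl3_le: "degree (refl3 m n 1 p) \<le> 1"
proof (rule degree_le, intro allI impI)
  fix i :: nat assume "1 < i"
  then show "coeff (refl3 m n 1 p) i = 0"
    unfolding refl3_def by (simp add: coeff_sum coeff_monom)
qed

lemma eval3_degree_le_1:
  assumes "degree q \<le> 1"
  shows "eval3 q z1 z2 z3 = eval2 (coeff q 0) z1 z2 + z3 * eval2 (coeff q 1) z1 z2"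
proof -
  have "poly q x = (\<Sum>i\<le>1. coeff q i * x ^ i)" for x
    unfolding poly_altdef
    by (rule sum.mono_neutral_left) (use assms in \<open>auto simp: coeff_eq_0\<close>)
  then show ?thesis unfolding eval3_def eval2_def by simp
qed

lemma zero_set_eval3_eq_graph:
  assumes "degree q \<le> 1"
  shows "{(z1, z2, z3). eval3 q z1 z2 z3 = 0} \<inter> {(z1, z2, z3). eval2 (coeff q 1) z1 z2 \<noteq> 0} =
    {(z1, z2, - eval2 (coeff q 0) z1 z2 / eval2 (coeff q 1) z1 z2) | z1 z2.
       (z1, z2) \<in> {(z1, z2). eval2 (coeff q 1) z1 z2 \<noteq> 0}}"
  using eval3_degree_le_1[OF assms] by (auto simp: field_simps add_eq_0_iff)

theorem lemma3p1:
  fixes p :: poly3 and m n :: nat and \<zeta>1 \<zeta>2 \<zeta>3 :: complex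
  defines "pt \<equiv> refl3 m n 1 p"
  assumes irred: "irreducible p"
    and deg: "deg_z1 p = m" "deg_z2 p = n" "deg_z3 p = 1"
    and zero_free: "\<forall>z1 z2 z3. norm z1 < 1 \<and> norm z2 < 1 \<and> norm z3 < 1 \<longrightarrow> eval3 p z1 z2 z3 \<noteq> 0"
    and cop: "coprime p pt"
    and torus: "norm \<zeta>1 = 1" "norm \<zeta>2 = 1" "norm \<zeta>3 = 1"
    and zero: "eval3 pt \<zeta>1 \<zeta>2 \<zeta>3 = 0"
    and not_line: "\<not> (\<forall>t. norm t = 1 \<longrightarrow> eval3 pt \<zeta>1 \<zeta>2 t = 0)"
  shows "\<exists>U V. open U \<and> (\<zeta>1, \<zeta>2, \<zeta>3) \<in> U \<and> open V \<and>
           {(z1, z2, z3). eval3 pt z1 z2 z3 = 0} \<inter> U =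
             {(z1, z2, - eval2 (coeff pt 0) z1 z2 / eval2 (coeff pt 1) z1 z2) | z1 z2. (z1, z2) \<in> V}
         \<and> (\<exists>W. (\<zeta>1, \<zeta>2) \<in> W \<and>
               holo2_on (\<lambda>(z1, z2). - eval2 (coeff pt 0) z1 z2 / eval2 (coeff pt 1) z1 z2) W)"
proof -
  define V where "V = {(z1, z2). eval2 (coeff pt 1) z1 z2 \<noteq> 0}"
  define U where "U = (\<lambda>(z1, z2, z3 :: complex). (z1, z2)) -` V"
  have affine: "degree pt \<le> 1"
    unfolding pt_def by (rule degree_refl3_le)
  have holo: "holo2_on (\<lambda>(z1, z2). - eval2 (coeff pt 0) z1 z2 / eval2 (coeff pt 1) z1 z2) V"
    using holo2_on_eval2_divide[of "- coeff pt 0" "coeff pt 1"] by (simp add: V_def eval2_uminus)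
  then have "open V" by (simp add: holo2_on_iff)
  then have "open U"
    unfolding U_def case_prod_beta by (rule continuous_open_vimage) (intro continuous_intros)
  have in_V: "(\<zeta>1, \<zeta>2) \<in> V"
    using zero not_line eval3_degree_le_1[OF affine] by (auto simp: V_def)
  have graph: "{(z1, z2, z3). eval3 pt z1 z2 z3 = 0} \<inter> U =
      {(z1, z2, - eval2 (coeff pt 0) z1 z2 / eval2 (coeff pt 1) z1 z2) | z1 z2. (z1, z2) \<in> V}"
    using zero_set_eval3_eq_graph[OF affine] by (simp add: U_def V_def vimage_def case_prod_beta')
  show ?thesis
    using \<open>open U\<close> \<open>open V\<close> in_V graph holo by (intro exI[of _ U] exI[of _ V]) (auto simp: U_def)
qed

end
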